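(* For every $-1\le j\le d-2$ and every $j$-cell $\rho$ of $T_{d,k}$ (for $j=-1$, $\rho=\emptyset$), the link $\mathrm{lk}_{T_{d,k}}(\rho)=\{\sigma\in T_{d,k}:\sigma\cap\rho=\emptyset,\ \sigma\cup\rho\in T_{d,k}\}$ is isomorphic, as a simplicial complex, to $T_{d-|\rho|,k}$.
   Context: For $d,k\ge1$, the $k$-regular $d$-dimensional arboreal complex $T_{d,k}$ is the simplicial complex obtained by starting from a single $d$-simplex $\mathcal T$, attaching to each of its $(d-1)$-faces $k-1$ new $d$-simplices each using a new vertex, and inductively attaching to each $(d-1)$-face created in the previous step $k-1$ new $d$-simplices each using a new vertex; $T_{d,k}$ is the union over all steps. *)

theory Defs
  imports Main
begin

text \<open>Vertices: Orig i (i = 0..d) are the vertices of the initial d-simplex;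
  Fresh nv u c is the c-th new vertex (1 <= c <= k-1) attached to the (d-1)-face
  obtained by deleting the vertex u from the facet whose own new vertex is nv
  (nv = None for the initial simplex).  This naming guarantees every attached
  simplex uses a brand-new vertex.\<close>

datatype vtx = Orig nat | Fresh "vtx option" vtx nat

text \<open>Facets, each paired with the new vertex it was created with (None for the
  initial simplex).\<close>

inductive_set arb_facets :: "nat \<Rightarrow> nat \<Rightarrow> (vtx set \<times> vtx option) set"
  for d k :: nat where
  root: "({Orig i | i. i \<le> d}, None) \<in> arb_facets d k"
| step: "\<lbrakk> (\<sigma>, nv) \<in> arb_facets d k; u \<in> \<sigma>; nv \<noteq> Some u; 1 \<le> c; c \<le> k - 1 \<rbrakk>
         \<Longrightarrow> (insert (Fresh nv u c) (\<sigma> - {u}), Some (Fresh nv u c)) \<in> arb_facets d k"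

definition arboreal :: "nat \<Rightarrow> nat \<Rightarrow> vtx set set" where
  "arboreal d k = {\<tau>. \<exists>\<sigma> nv. (\<sigma>, nv) \<in> arb_facets d k \<and> \<tau> \<subseteq> \<sigma>}"

definition link :: "'a set set \<Rightarrow> 'a set \<Rightarrow> 'a set set" where
  "link K \<rho> = {\<sigma> \<in> K. \<sigma> \<inter> \<rho> = {} \<and> \<sigma> \<union> \<rho> \<in> K}"

text \<open>Isomorphism of simplicial complexes (given as downward closed set systems;
  the vertex set of K is the union of its faces).\<close>
definition simp_iso :: "'a set set \<Rightarrow> 'b set set \<Rightarrow> bool" where
  "simp_iso K L \<longleftrightarrow> (\<exists>f. bij_betw f (\<Union>K) (\<Union>L) \<and>
      (\<forall>\<sigma>. \<sigma> \<subseteq> \<Union>K \<longrightarrow> (\<sigma> \<in> K \<longleftrightarrow> f ` \<sigma> \<in> L)))"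

end

theory Submission
  imports Defs
begin

text \<open>Vertex names are terms whose size grows strictly along the construction; this makes
  every new vertex genuinely new and identifies a facet by its new vertex.

  Given a face \<rho>, let \<sigma>0 be the facet through which \<rho> enters the complex: \<rho> \<subseteq> \<sigma>0, and
  the new vertex of \<sigma>0, if any, lies in \<rho>. The facets containing \<rho> are exactly those
  generated from \<sigma>0 by steps that never remove a vertex of \<rho>, and deleting \<rho> from them
  replays the construction of T_{m,k}, m = d - |\<rho>|, started from the m-simplex \<sigma>0 - \<rho>.
  Renaming the vertices of T_{m,k} along this correspondence is injective and maps each
  facet \<tau>' to the facet \<tau>' \<union> \<rho>, so it is an isomorphism onto the link.\<close>

lemma arb_facets_None: "(\<sigma>, None) \<in> arb_facets d k \<Longrightarrow> \<sigma> = {Orig i | i. i \<le> d}"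
  by (cases rule: arb_facets.cases) auto

lemma arb_facets_Some_mem: "(\<sigma>, Some w) \<in> arb_facets d k \<Longrightarrow> w \<in> \<sigma>"
  by (cases rule: arb_facets.cases) auto

lemma arb_facets_Some_not_Orig: "(\<sigma>, Some (Orig i)) \<notin> arb_facets d k"
  by (auto elim: arb_facets.cases)

lemma arb_facets_Some_parent:
  "(\<sigma>, Some (Fresh nv u c)) \<in> arb_facets d k \<Longrightarrow> \<exists>\<sigma>'. (\<sigma>', nv) \<in> arb_facets d k \<and> u \<in> \<sigma>'"
  by (cases rule: arb_facets.cases) auto

lemma arb_facets_size_less_Fresh:
  "(\<sigma>, nv) \<in> arb_facets d k \<Longrightarrow> y \<in> \<sigma> \<Longrightarrow> size y < size (Fresh nv u c)"
proof (induction arbitrary: u c rule: arb_facets.induct)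
  case root
  then show ?case by auto
next
  case (step \<sigma> nv u' c')
  have "size y \<le> size (Fresh nv u' c')"
    using step.prems step.IH by (auto simp del: vtx.size intro: less_imp_le)
  also have "\<dots> < size (Fresh (Some (Fresh nv u' c')) u c)"
    by simp
  finally show ?case .
qed

lemma arb_facets_size_less_new_vertex:
  "(\<sigma>, Some w) \<in> arb_facets d k \<Longrightarrow> y \<in> \<sigma> \<Longrightarrow> y \<noteq> w \<Longrightarrow> size y < size w"
  by (cases rule: arb_facets.cases) (auto intro: arb_facets_size_less_Fresh)

lemma arb_facets_Fresh_notin: "(\<sigma>, nv) \<in> arb_facets d k \<Longrightarrow> Fresh nv u c \<notin> \<sigma>"
  using arb_facets_size_less_Fresh by blast

lemma arb_facets_card: "(\<sigma>, nv) \<in> arb_facets d k \<Longrightarrow> card \<sigma> = Suc d"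
proof (induction rule: arb_facets.induct)
  case root
  have "{Orig i | i. i \<le> d} = Orig ` {..d}" by auto
  then show ?case by (simp add: card_image inj_on_def)
next
  case (step \<sigma> nv u c)
  then have "finite \<sigma>" by (simp add: card_ge_0_finite)
  with step show ?case by (simp add: arb_facets_Fresh_notin card_Diff_singleton)
qed

lemma arb_facets_finite: "(\<sigma>, nv) \<in> arb_facets d k \<Longrightarrow> finite \<sigma>"
  by (simp add: arb_facets_card card_ge_0_finite)

lemma arb_facets_unique: "(\<sigma>, nv) \<in> arb_facets d k \<Longrightarrow> (\<sigma>', nv) \<in> arb_facets d k \<Longrightarrow> \<sigma> = \<sigma>'"
proof (induction arbitrary: \<sigma>' rule: arb_facets.induct)
  case root
  then show ?case using arb_facets_None by blast
next
  case (step \<sigma> nv u c)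
  from step.prems show ?case
    by (cases rule: arb_facets.cases) (use step.IH in auto)
qed

lemma arb_facets_new_vertex_eq:
  assumes "(\<sigma>, Some w) \<in> arb_facets d k" "(\<tau>, Some x) \<in> arb_facets d k" "x \<in> \<sigma>" "w \<in> \<tau>"
  shows "x = w"
  using arb_facets_size_less_new_vertex[OF assms(1,3)] arb_facets_size_less_new_vertex[OF assms(2,4)]
  by fastforce

lemma ex_arb_facet_new_vertex_in:
  "(\<tau>, nv) \<in> arb_facets d k \<Longrightarrow> \<rho> \<subseteq> \<tau> \<Longrightarrow>
   \<exists>\<sigma> nv'. (\<sigma>, nv') \<in> arb_facets d k \<and> \<rho> \<subseteq> \<sigma> \<and> set_option nv' \<subseteq> \<rho>"
proof (induction rule: arb_facets.induct)
  case root
  then show ?case using arb_facets.root by fastforce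
next
  case (step \<sigma> nv u c)
  show ?case
  proof (cases "Fresh nv u c \<in> \<rho>")
    case True
    then show ?thesis using step.prems arb_facets.step[OF step.hyps] by auto
  next
    case False
    then show ?thesis using step by blast
  qed
qed

lemma mem_Union_arboreal: "x \<in> \<Union>(arboreal d k) \<longleftrightarrow> (\<exists>\<sigma> nv. (\<sigma>, nv) \<in> arb_facets d k \<and> x \<in> \<sigma>)"
  unfolding arboreal_def by blast

lemma arb_facets_subset_Union_arboreal: "(\<sigma>, nv) \<in> arb_facets d k \<Longrightarrow> \<sigma> \<subseteq> \<Union>(arboreal d k)"
  unfolding arboreal_def by blast

lemma arb_facets_vertex_cases:
  "(\<tau>, nv) \<in> arb_facets d k \<Longrightarrow> y \<in> \<tau> \<Longrightarrow>
   (\<exists>i\<le>d. y = Orig i) \<or> (\<exists>\<sigma>. (\<sigma>, Some y) \<in> arb_facets d k)"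
proof (induction rule: arb_facets.induct)
  case root
  then show ?case by auto
next
  case (step \<sigma> nv u c)
  then show ?case using arb_facets.step[OF step.hyps] by auto
qed

lemma arboreal_vertex_Orig: "Orig i \<in> \<Union>(arboreal d k) \<Longrightarrow> i \<le> d"
  unfolding mem_Union_arboreal using arb_facets_vertex_cases arb_facets_Some_not_Orig by blast

lemma arboreal_vertex_Fresh:
  "Fresh nv u c \<in> \<Union>(arboreal d k) \<Longrightarrow> \<exists>\<sigma>. (\<sigma>, nv) \<in> arb_facets d k \<and> u \<in> \<sigma>"
  unfolding mem_Union_arboreal using arb_facets_vertex_cases arb_facets_Some_parent by blast

lemma arboreal_vertex_Fresh_parents:
  "Fresh nv u c \<in> \<Union>(arboreal d k) \<Longrightarrow> u \<in> \<Union>(arboreal d k) \<and> set_option nv \<subseteq> \<Union>(arboreal d k)"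
proof -
  assume "Fresh nv u c \<in> \<Union>(arboreal d k)"
  then obtain \<sigma> where "(\<sigma>, nv) \<in> arb_facets d k" "u \<in> \<sigma>"
    using arboreal_vertex_Fresh by blast
  moreover have "set_option nv \<subseteq> \<sigma>"
    using \<open>(\<sigma>, nv) \<in> arb_facets d k\<close> by (cases nv) (auto dest: arb_facets_Some_mem)
  ultimately show ?thesis using arb_facets_subset_Union_arboreal by blast
qed

lemma inj_on_disjoint_if_card_image_Un:
  assumes "finite A" "finite B" "card (f ` A \<union> B) = card A + card B"
  shows "inj_on f A \<and> f ` A \<inter> B = {}"
proof -
  have "card (f ` A \<union> B) \<le> card (f ` A) + card B" by (rule card_Un_le)
  moreover have "card (f ` A) \<le> card A" by (rule card_image_le[OF assms(1)])
  ultimately have "card (f ` A) = card A" "card (f ` A \<union> B) = card (f ` A) + card B"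
    using assms(3) by linarith+
  then show ?thesis
    using assms card_Un_Int[of "f ` A" B] by (auto simp: eq_card_imp_inj_on)
qed

text \<open>The renaming: the initial simplex goes to \<sigma>0 - \<rho> via h, and the marker None of the
  initial simplex becomes the new vertex n0 of \<sigma>0.\<close>
fun relabel :: "(nat \<Rightarrow> vtx) \<Rightarrow> vtx option \<Rightarrow> vtx \<Rightarrow> vtx" where
  "relabel h n0 (Orig i) = h i"
| "relabel h n0 (Fresh nv u c) =
     Fresh (case nv of None \<Rightarrow> n0 | Some w \<Rightarrow> Some (relabel h n0 w)) (relabel h n0 u) c"

locale link_chart =
  fixes d k :: nat and \<rho> \<sigma>0 :: "vtx set" and nv0 :: "vtx option" and h :: "nat \<Rightarrow> vtx"
  assumes facet: "(\<sigma>0, nv0) \<in> arb_facets d k"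
    and face_subset: "\<rho> \<subseteq> \<sigma>0"
    and new_vertex_in_face: "set_option nv0 \<subseteq> \<rho>"
    and enum: "bij_betw h {0..<Suc (d - card \<rho>)} (\<sigma>0 - \<rho>)"
begin

abbreviation "m \<equiv> d - card \<rho>"
abbreviation "\<phi> \<equiv> relabel h nv0"

text \<open>\<psi> nv' is the new vertex of the image of a facet whose new vertex is nv'.\<close>
definition \<psi> :: "vtx option \<Rightarrow> vtx option" where
  "\<psi> nv = (case nv of None \<Rightarrow> nv0 | Some w \<Rightarrow> Some (\<phi> w))"

lemma \<psi>_simps [simp]: "\<psi> None = nv0" "\<psi> (Some w) = Some (\<phi> w)"
  by (simp_all add: \<psi>_def)

lemma relabel_Fresh [simp]: "\<phi> (Fresh nv u c) = Fresh (\<psi> nv) (\<phi> u) c"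
  by (simp add: \<psi>_def)

declare relabel.simps(2) [simp del]

lemma new_vertex_mem_face: "nv0 = Some x \<Longrightarrow> x \<in> \<rho>"
  using new_vertex_in_face by auto

lemma relabel_root: "\<phi> ` {Orig i | i. i \<le> m} = \<sigma>0 - \<rho>"
proof -
  have "{Orig i | i. i \<le> m} = Orig ` {0..<Suc m}" by auto
  then show ?thesis using enum by (simp add: image_image bij_betw_def)
qed

lemma card_facet_add_card_face: "(\<tau>', nv') \<in> arb_facets m k \<Longrightarrow> card \<tau>' + card \<rho> = Suc d"
proof -
  assume "(\<tau>', nv') \<in> arb_facets m k"
  then have "card \<tau>' = card (\<sigma>0 - \<rho>)"
    using arb_facets_card bij_betw_same_card[OF enum] by simp
  also have "\<dots> + card \<rho> = card \<sigma>0"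
    using face_subset arb_facets_finite[OF facet] by (metis card_Diff_subset card_mono diff_add finite_subset)
  finally show ?thesis using arb_facets_card[OF facet] by simp
qed

lemma size_less_Fresh_\<psi>:
  "(\<tau>', nv') \<in> arb_facets m k \<Longrightarrow> y \<in> \<sigma>0 \<Longrightarrow> size y < size (Fresh (\<psi> nv') x c)"
proof (induction arbitrary: x c rule: arb_facets.induct)
  case root
  then show ?case using arb_facets_size_less_Fresh[OF facet] by simp
next
  case (step \<sigma>' nv' u' c')
  then have "size y < size (\<phi> (Fresh nv' u' c'))" by simp
  also have "\<dots> < size (Fresh (\<psi> (Some (Fresh nv' u' c'))) x c)" by simp
  finally show ?case .
qed

text \<open>Counting: |\<phi> ` \<tau>' \<union> \<rho>| = d + 1 = |\<tau>'| + |\<rho>|.\<close>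
lemma inj_disjoint_if_image_facet:
  assumes "(\<tau>', nv') \<in> arb_facets m k" "(\<phi> ` \<tau>' \<union> \<rho>, n) \<in> arb_facets d k"
  shows "inj_on \<phi> \<tau>' \<and> \<phi> ` \<tau>' \<inter> \<rho> = {}"
  using inj_on_disjoint_if_card_image_Un arb_facets_finite[OF assms(1)]
    finite_subset[OF face_subset arb_facets_finite[OF facet]]
    arb_facets_card[OF assms(2)] card_facet_add_card_face[OF assms(1)] by metis

lemma image_facet: "(\<tau>', nv') \<in> arb_facets m k \<Longrightarrow> (\<phi> ` \<tau>' \<union> \<rho>, \<psi> nv') \<in> arb_facets d k"
proof (induction rule: arb_facets.induct)
  case root
  then show ?case using facet face_subset relabel_root by (simp add: Un_absorb2)
next
  case (step \<sigma>' nv' u' c)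
  let ?\<sigma> = "\<phi> ` \<sigma>' \<union> \<rho>"
  have inj: "inj_on \<phi> \<sigma>'" and disj: "\<phi> ` \<sigma>' \<inter> \<rho> = {}"
    using inj_disjoint_if_image_facet[OF step.hyps(1) step.IH] by auto
  have "\<psi> nv' \<noteq> Some (\<phi> u')"
  proof (cases nv')
    case None
    then show ?thesis using new_vertex_mem_face disj step.hyps(2) by auto
  next
    case (Some w)
    then have "w \<in> \<sigma>'" using step.hyps(1) arb_facets_Some_mem by blast
    then show ?thesis using Some step.hyps(2,3) inj by (auto dest: inj_onD)
  qed
  then have "(insert (\<phi> (Fresh nv' u' c)) (?\<sigma> - {\<phi> u'}), \<psi> (Some (Fresh nv' u' c))) \<in> arb_facets d k"
    using arb_facets.step[OF step.IH _ _ step.hyps(4,5)] step.hyps(2) by simp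
  moreover have "?\<sigma> - {\<phi> u'} = \<phi> ` (\<sigma>' - {u'}) \<union> \<rho>"
    using disj inj step.hyps(2) by (auto simp: inj_on_def)
  ultimately show ?case by simp
qed

lemma inj_on_relabel_facet: "(\<tau>', nv') \<in> arb_facets m k \<Longrightarrow> inj_on \<phi> \<tau>'"
  using inj_disjoint_if_image_facet image_facet by blast

lemma relabel_facet_disjoint: "(\<tau>', nv') \<in> arb_facets m k \<Longrightarrow> \<phi> ` \<tau>' \<inter> \<rho> = {}"
  using inj_disjoint_if_image_facet image_facet by blast

lemma new_vertex_in_face_eq:
  assumes "(\<tau>, Some x) \<in> arb_facets d k" "x \<in> \<rho>" "\<rho> \<subseteq> \<tau>"
  shows "nv0 = Some x"
proof (cases nv0)
  case None
  then have "x \<in> {Orig i | i. i \<le> d}"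
    using arb_facets_None[OF facet[unfolded None]] assms(2) face_subset by auto
  then show ?thesis using assms(1) arb_facets_Some_not_Orig by auto
next
  case (Some w)
  then show ?thesis
    using arb_facets_new_vertex_eq[OF facet[unfolded Some] assms(1)]
      assms new_vertex_in_face face_subset by auto
qed

lemma chart_facet_is_image:
  "\<exists>\<tau>' nv'. (\<tau>', nv') \<in> arb_facets m k \<and> \<sigma>0 = \<phi> ` \<tau>' \<union> \<rho> \<and> nv0 = \<psi> nv'"
  using arb_facets.root relabel_root face_subset by (intro exI[of _ "{Orig i | i. i \<le> m}"] exI[of _ None]) auto

lemma facet_containing_face_is_image:
  "(\<tau>, nv) \<in> arb_facets d k \<Longrightarrow> \<rho> \<subseteq> \<tau> \<Longrightarrow>
   \<exists>\<tau>' nv'. (\<tau>', nv') \<in> arb_facets m k \<and> \<tau> = \<phi> ` \<tau>' \<union> \<rho> \<and> nv = \<psi> nv'"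
proof (induction rule: arb_facets.induct)
  case root
  then have "nv0 = None"
    using new_vertex_in_face facet arb_facets_Some_not_Orig by (cases nv0) auto
  then have "{Orig i | i. i \<le> d} = \<sigma>0" using arb_facets_None facet by auto
  then show ?case using chart_facet_is_image \<open>nv0 = None\<close> by simp
next
  case (step \<sigma> nv u c)
  let ?x = "Fresh nv u c"
  show ?case
  proof (cases "?x \<in> \<rho>")
    case True
    have "nv0 = Some ?x"
      using new_vertex_in_face_eq[OF arb_facets.step[OF step.hyps] True step.prems] .
    moreover have "insert ?x (\<sigma> - {u}) = \<sigma>0"
      using arb_facets_unique[OF arb_facets.step[OF step.hyps]] facet \<open>nv0 = Some ?x\<close> by simp
    ultimately show ?thesis using chart_facet_is_image by simp
  next
    case False
    then have "\<rho> \<subseteq> \<sigma>" "u \<notin> \<rho>"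
      using step.prems arb_facets_Fresh_notin[OF step.hyps(1)] step.hyps(2) by auto
    then obtain \<sigma>' nv' where P: "(\<sigma>', nv') \<in> arb_facets m k"
      and \<sigma>: "\<sigma> = \<phi> ` \<sigma>' \<union> \<rho>" and nv: "nv = \<psi> nv'"
      using step.IH by blast
    obtain u' where u': "u' \<in> \<sigma>'" "u = \<phi> u'" using \<sigma> step.hyps(2) \<open>u \<notin> \<rho>\<close> by auto
    have "nv' \<noteq> Some u'" using nv u' step.hyps(3) by auto
    then have "(insert (Fresh nv' u' c) (\<sigma>' - {u'}), Some (Fresh nv' u' c)) \<in> arb_facets m k"
      using arb_facets.step[OF P u'(1) _ step.hyps(4,5)] by blast
    moreover have "\<sigma> - {u} = \<phi> ` (\<sigma>' - {u'}) \<union> \<rho>"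
      using \<open>u \<notin> \<rho>\<close> inj_on_relabel_facet[OF P] u' \<sigma> by (auto simp: inj_on_def)
    ultimately show ?thesis
      using nv u' by (intro exI[of _ "insert (Fresh nv' u' c) (\<sigma>' - {u'})"] exI) auto
  qed
qed

lemma relabel_vertex_notin_face: "x \<in> \<Union>(arboreal m k) \<Longrightarrow> \<phi> x \<notin> \<rho>"
  unfolding mem_Union_arboreal using relabel_facet_disjoint by blast

lemma relabel_Orig_vertex: "Orig i \<in> \<Union>(arboreal m k) \<Longrightarrow> \<phi> (Orig i) \<in> \<sigma>0"
  using arboreal_vertex_Orig relabel_root by blast

lemma size_less_relabel_Fresh_vertex:
  "Fresh nv u c \<in> \<Union>(arboreal m k) \<Longrightarrow> y \<in> \<sigma>0 \<Longrightarrow> size y < size (\<phi> (Fresh nv u c))"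
  using arboreal_vertex_Fresh size_less_Fresh_\<psi> relabel_Fresh by metis

lemma relabel_Orig_ne_Fresh:
  "Orig i \<in> \<Union>(arboreal m k) \<Longrightarrow> Fresh nv u c \<in> \<Union>(arboreal m k) \<Longrightarrow> \<phi> (Orig i) \<noteq> \<phi> (Fresh nv u c)"
  using relabel_Orig_vertex size_less_relabel_Fresh_vertex by (metis less_irrefl)

lemma \<psi>_eq_chart_new_vertex_iff:
  assumes "set_option nv \<subseteq> \<Union>(arboreal m k)"
  shows "\<psi> nv = nv0 \<longleftrightarrow> nv = None"
proof (cases nv)
  case (Some w)
  then have "\<phi> w \<notin> \<rho>" using assms relabel_vertex_notin_face by simp
  then show ?thesis using Some new_vertex_mem_face by (metis \<psi>_simps(2) option.distinct(1))
qed simp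

lemma inj_on_relabel: "inj_on \<phi> (\<Union>(arboreal m k))"
proof -
  let ?V = "\<Union>(arboreal m k)"
  have "a \<in> ?V \<Longrightarrow> b \<in> ?V \<Longrightarrow> \<phi> a = \<phi> b \<Longrightarrow> a = b" for a b
  proof (induction a arbitrary: b)
    case (Orig i)
    show ?case
    proof (cases b)
      case (Orig j)
      have "i \<le> m" "j \<le> m" using Orig.prems \<open>b = Orig j\<close> arboreal_vertex_Orig by auto
      then show ?thesis using Orig.prems \<open>b = Orig j\<close> enum by (simp add: bij_betw_def inj_on_def)
    next
      case Fresh
      then show ?thesis using Orig.prems relabel_Orig_ne_Fresh by blast
    qed
  next
    case (Fresh nv u c)
    show ?case
    proof (cases b)
      case Orig
      then show ?thesis using Fresh.prems relabel_Orig_ne_Fresh by metis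
    next
      case (Fresh nv' u' c')
      have parents: "u \<in> ?V" "set_option nv \<subseteq> ?V" "u' \<in> ?V" "set_option nv' \<subseteq> ?V"
        using Fresh.prems \<open>b = Fresh nv' u' c'\<close> arboreal_vertex_Fresh_parents by blast+
      have eq: "\<psi> nv = \<psi> nv'" "\<phi> u = \<phi> u'" "c = c'"
        using Fresh.prems \<open>b = Fresh nv' u' c'\<close> by auto
      have "u = u'" using Fresh.IH(2) parents eq by blast
      moreover have "nv = nv'"
      proof (cases "nv = None \<or> nv' = None")
        case True
        then show ?thesis using eq(1) parents \<psi>_eq_chart_new_vertex_iff by (metis \<psi>_simps(1))
      next
        case False
        then obtain w w' where "nv = Some w" "nv' = Some w'" by auto
        then show ?thesis using eq(1) parents Fresh.IH(1) by simp
      qed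
      ultimately show ?thesis using eq \<open>b = Fresh nv' u' c'\<close> by simp
    qed
  qed
  then show ?thesis by (rule inj_onI)
qed

lemma link_eq_images:
  "link (arboreal d k) \<rho> = {\<sigma>. \<exists>\<tau>' nv'. (\<tau>', nv') \<in> arb_facets m k \<and> \<sigma> \<subseteq> \<phi> ` \<tau>'}"
proof (intro set_eqI iffI)
  fix \<sigma> assume "\<sigma> \<in> link (arboreal d k) \<rho>"
  then have "\<sigma> \<inter> \<rho> = {}" and "\<sigma> \<union> \<rho> \<in> arboreal d k" unfolding link_def by auto
  then obtain \<tau> nv where "(\<tau>, nv) \<in> arb_facets d k" "\<sigma> \<union> \<rho> \<subseteq> \<tau>" unfolding arboreal_def by blast
  then obtain \<tau>' nv' where "(\<tau>', nv') \<in> arb_facets m k" "\<tau> = \<phi> ` \<tau>' \<union> \<rho>"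
    using facet_containing_face_is_image by blast
  moreover have "\<sigma> \<subseteq> \<phi> ` \<tau>'"
    using \<open>\<sigma> \<inter> \<rho> = {}\<close> \<open>\<sigma> \<union> \<rho> \<subseteq> \<tau>\<close> \<open>\<tau> = \<phi> ` \<tau>' \<union> \<rho>\<close> by blast
  ultimately show "\<sigma> \<in> {\<sigma>. \<exists>\<tau>' nv'. (\<tau>', nv') \<in> arb_facets m k \<and> \<sigma> \<subseteq> \<phi> ` \<tau>'}" by blast
next
  fix \<sigma> assume "\<sigma> \<in> {\<sigma>. \<exists>\<tau>' nv'. (\<tau>', nv') \<in> arb_facets m k \<and> \<sigma> \<subseteq> \<phi> ` \<tau>'}"
  then obtain \<tau>' nv' where facet': "(\<tau>', nv') \<in> arb_facets m k" and "\<sigma> \<subseteq> \<phi> ` \<tau>'" by blast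
  then have "\<sigma> \<union> \<rho> \<subseteq> \<phi> ` \<tau>' \<union> \<rho>" "\<sigma> \<inter> \<rho> = {}"
    using relabel_facet_disjoint[OF facet'] by auto
  with image_facet[OF facet'] show "\<sigma> \<in> link (arboreal d k) \<rho>"
    unfolding link_def by (auto simp: arboreal_def)
qed

lemma Union_link_eq_image: "\<Union>(link (arboreal d k) \<rho>) = \<phi> ` \<Union>(arboreal m k)"
proof (intro equalityI subsetI)
  fix x assume "x \<in> \<Union>(link (arboreal d k) \<rho>)"
  then obtain \<tau>' nv' where "(\<tau>', nv') \<in> arb_facets m k" "x \<in> \<phi> ` \<tau>'"
    unfolding link_eq_images by blast
  then show "x \<in> \<phi> ` \<Union>(arboreal m k)" using arb_facets_subset_Union_arboreal by blast
next
  fix x assume "x \<in> \<phi> ` \<Union>(arboreal m k)"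
  then obtain y where "y \<in> \<Union>(arboreal m k)" "x = \<phi> y" by blast
  then obtain \<tau>' nv' where "(\<tau>', nv') \<in> arb_facets m k" "x \<in> \<phi> ` \<tau>'"
    unfolding mem_Union_arboreal by blast
  then show "x \<in> \<Union>(link (arboreal d k) \<rho>)" unfolding link_eq_images by blast
qed

lemma simp_iso_arboreal_link: "simp_iso (arboreal m k) (link (arboreal d k) \<rho>)"
  unfolding simp_iso_def
proof (intro exI conjI allI impI)
  show "bij_betw \<phi> (\<Union>(arboreal m k)) (\<Union>(link (arboreal d k) \<rho>))"
    using inj_on_relabel Union_link_eq_image by (simp add: bij_betw_def)
next
  fix \<sigma> assume \<sigma>: "\<sigma> \<subseteq> \<Union>(arboreal m k)"
  have image_subset_iff: "\<phi> ` \<sigma> \<subseteq> \<phi> ` \<tau>' \<longleftrightarrow> \<sigma> \<subseteq> \<tau>'" if "(\<tau>', nv') \<in> arb_facets m k" for \<tau>' nv'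
    using inj_on_image_mem_iff[OF inj_on_relabel _ arb_facets_subset_Union_arboreal[OF that]] \<sigma>
    by blast
  have "\<sigma> \<in> arboreal m k \<longleftrightarrow> (\<exists>\<tau>' nv'. (\<tau>', nv') \<in> arb_facets m k \<and> \<sigma> \<subseteq> \<tau>')"
    unfolding arboreal_def by blast
  also have "\<dots> \<longleftrightarrow> (\<exists>\<tau>' nv'. (\<tau>', nv') \<in> arb_facets m k \<and> \<phi> ` \<sigma> \<subseteq> \<phi> ` \<tau>')"
    using image_subset_iff by meson
  also have "\<dots> \<longleftrightarrow> \<phi> ` \<sigma> \<in> link (arboreal d k) \<rho>"
    unfolding link_eq_images by simp
  finally show "\<sigma> \<in> arboreal m k \<longleftrightarrow> \<phi> ` \<sigma> \<in> link (arboreal d k) \<rho>" .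
qed

end

lemma simp_iso_sym: "simp_iso K L \<Longrightarrow> simp_iso L K"
proof -
  assume "simp_iso K L"
  then obtain f where f: "bij_betw f (\<Union>K) (\<Union>L)"
    and faces: "\<And>\<sigma>. \<sigma> \<subseteq> \<Union>K \<Longrightarrow> \<sigma> \<in> K \<longleftrightarrow> f ` \<sigma> \<in> L"
    unfolding simp_iso_def by blast
  let ?g = "inv_into (\<Union>K) f"
  have g: "bij_betw ?g (\<Union>L) (\<Union>K)" using bij_betw_inv_into[OF f] .
  have "\<tau> \<in> L \<longleftrightarrow> ?g ` \<tau> \<in> K" if "\<tau> \<subseteq> \<Union>L" for \<tau>
  proof -
    have "?g ` \<tau> \<subseteq> ?g ` \<Union>L" using that by (rule image_mono)
    also have "\<dots> = \<Union>K" using g by (rule bij_betw_imp_surj_on)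
    finally have "?g ` \<tau> \<subseteq> \<Union>K" .
    moreover have "f ` ?g ` \<tau> = \<tau>"
      using image_inv_into_cancel[OF bij_betw_imp_surj_on[OF f] that] .
    ultimately show ?thesis using faces by metis
  qed
  then show ?thesis
    unfolding simp_iso_def using g by blast
qed

lemma ex_link_chart:
  assumes "\<rho> \<in> arboreal d k" "card \<rho> \<le> d"
  shows "\<exists>\<sigma>0 nv0 h. link_chart d k \<rho> \<sigma>0 nv0 h"
proof -
  obtain \<tau> nv where "(\<tau>, nv) \<in> arb_facets d k" "\<rho> \<subseteq> \<tau>"
    using assms(1) unfolding arboreal_def by blast
  then obtain \<sigma>0 nv0 where \<sigma>0: "(\<sigma>0, nv0) \<in> arb_facets d k" "\<rho> \<subseteq> \<sigma>0" "set_option nv0 \<subseteq> \<rho>"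
    using ex_arb_facet_new_vertex_in by blast
  have "card (\<sigma>0 - \<rho>) = Suc (d - card \<rho>)"
    using \<sigma>0 assms(2) arb_facets_card arb_facets_finite by (simp add: card_Diff_subset finite_subset)
  then obtain h where "bij_betw h {0..<Suc (d - card \<rho>)} (\<sigma>0 - \<rho>)"
    using ex_bij_betw_nat_finite arb_facets_finite[OF \<sigma>0(1)] by (metis finite_Diff)
  with \<sigma>0 show ?thesis by (blast intro: link_chart.intro)
qed

theorem proposition5:
  fixes d k :: nat and \<rho> :: "vtx set"
  assumes "1 \<le> d" and "1 \<le> k"
    and "\<rho> \<in> arboreal d k"
    and "card \<rho> \<le> d - 1"
  shows "simp_iso (link (arboreal d k) \<rho>) (arboreal (d - card \<rho>) k)"
proof -
  obtain \<sigma>0 nv0 h where "link_chart d k \<rho> \<sigma>0 nv0 h"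
    using ex_link_chart assms(3,4) by fastforce
  then interpret link_chart d k \<rho> \<sigma>0 nv0 h .
  show ?thesis by (rule simp_iso_sym[OF simp_iso_arboreal_link])
qed

end
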